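(* Let $u$ and $v$ be two prime words such that $u<_{lex}v$. Then $v=u^\alpha xy$ for some ordinal $\alpha$ and words $x,y$ such that $|x|\le|u|$ and $u<_{str}x$.
   Context: $A$ is a finite alphabet with a linear order $<_A$. Words are sequences of letters indexed by countable ordinals, $|x|$ is the length, $x^\alpha$ the concatenation of $\alpha$ copies of $x$. A suffix of $x$ is $x[\gamma,|x|)$, proper if $0<\gamma<|x|$. Write $x<_{str}x'$ if there are letters $a<_Ab$ and words $y,z,z'$ with $x=yaz$, $x'=ybz'$; $x\le_{lex}x'$ iff $x$ is a prefix of $x'$ or $x<_{str}x'$; $<_{lex}$ is its strict version. A word is primitive if $x=y^\alpha$ implies $\alpha=1$ and $y=x$; $w$ is prime if it is primitive and every proper suffix $z$ satisfies $w\le_{lex}z$. *)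

theory Defs
  imports Main
begin

text \<open>A word is a labelled
well-order: a well-order on a set of natural numbers (every countable ordinal is
the order type of such a well-order) together with a labelling of its field by
letters.  Two words are equal iff they are isomorphic as labelled well-orders.\<close>

type_synonym 'a word = "nat rel \<times> (nat \<Rightarrow> 'a)"

definition wf_word :: "'a word \<Rightarrow> bool" where
  "wf_word w \<longleftrightarrow> Well_order (fst w)"

definition wdom :: "'a word \<Rightarrow> nat set" where
  "wdom w = Field (fst w)"

definition word_iso :: "'a word \<Rightarrow> 'a word \<Rightarrow> (nat \<Rightarrow> nat) \<Rightarrow> bool" where
  "word_iso w w' f \<longleftrightarrow> bij_betw f (wdom w) (wdom w') \<and>
     (\<forall>i\<in>wdom w. \<forall>j\<in>wdom w. (i, j) \<in> fst w \<longleftrightarrow> (f i, f j) \<in> fst w') \<and>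
     (\<forall>i\<in>wdom w. snd w' (f i) = snd w i)"

definition word_eq :: "'a word \<Rightarrow> 'a word \<Rightarrow> bool" where
  "word_eq w w' \<longleftrightarrow> (\<exists>f. word_iso w w' f)"

definition subword :: "'a word \<Rightarrow> nat set \<Rightarrow> 'a word" where
  "subword w P = (Restr (fst w) P, snd w)"

definition letter :: "'a \<Rightarrow> 'a word" where
  "letter a = ({(0, 0)}, \<lambda>_. a)"

definition is_concat :: "'a word \<Rightarrow> 'a word \<Rightarrow> 'a word \<Rightarrow> bool" where
  "is_concat z x y \<longleftrightarrow> (\<exists>P \<subseteq> wdom z.
      (\<forall>i\<in>P. \<forall>j\<in>wdom z. (j, i) \<in> fst z \<longrightarrow> j \<in> P) \<and>
      word_eq (subword z P) x \<and> word_eq (subword z (wdom z - P)) y)"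

definition is_pow :: "'a word \<Rightarrow> 'a word \<Rightarrow> nat rel \<Rightarrow> bool" where
  "is_pow z u \<alpha> \<longleftrightarrow> (\<exists>f. bij_betw f (wdom z) (Field \<alpha> \<times> wdom u) \<and>
     (\<forall>i\<in>wdom z. \<forall>j\<in>wdom z. (i, j) \<in> fst z \<longleftrightarrow>
        ((fst (f i) \<noteq> fst (f j) \<and> (fst (f i), fst (f j)) \<in> \<alpha>) \<or>
         (fst (f i) = fst (f j) \<and> (snd (f i), snd (f j)) \<in> fst u))) \<and>
     (\<forall>i\<in>wdom z. snd z i = snd u (snd (f i))))"

definition str_less :: "'a::linorder word \<Rightarrow> 'a word \<Rightarrow> bool" where
  "str_less x x' \<longleftrightarrow> (\<exists>y z z' t t' a b. a < b \<and>
      wf_word y \<and> wf_word z \<and> wf_word z' \<and> wf_word t \<and> wf_word t' \<and>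
      is_concat x y t \<and> is_concat t (letter a) z \<and>
      is_concat x' y t' \<and> is_concat t' (letter b) z')"

definition is_prefix :: "'a word \<Rightarrow> 'a word \<Rightarrow> bool" where
  "is_prefix x x' \<longleftrightarrow> (\<exists>z. wf_word z \<and> is_concat x' x z)"

definition lex_le :: "'a::linorder word \<Rightarrow> 'a word \<Rightarrow> bool" where
  "lex_le x x' \<longleftrightarrow> is_prefix x x' \<or> str_less x x'"

definition lex_less :: "'a::linorder word \<Rightarrow> 'a word \<Rightarrow> bool" where
  "lex_less x x' \<longleftrightarrow> lex_le x x' \<and> \<not> word_eq x x'"

definition proper_suffix :: "'a word \<Rightarrow> 'a word \<Rightarrow> bool" where
  "proper_suffix z x \<longleftrightarrow> (\<exists>\<gamma>\<in>wdom x. (\<exists>j\<in>wdom x. j \<noteq> \<gamma> \<and> (j, \<gamma>) \<in> fst x) \<and>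
      word_eq z (subword x {i \<in> wdom x. (\<gamma>, i) \<in> fst x}))"

definition primitive :: "'a word \<Rightarrow> bool" where
  "primitive x \<longleftrightarrow> (\<forall>y \<alpha>. wf_word y \<and> Well_order \<alpha> \<and> is_pow x y \<alpha> \<longrightarrow>
      (\<exists>k. Field \<alpha> = {k}) \<and> word_eq y x)"

definition prime_word :: "'a::linorder word \<Rightarrow> bool" where
  "prime_word w \<longleftrightarrow> primitive w \<and>
     (\<forall>z. wf_word z \<and> proper_suffix z w \<longrightarrow> lex_le w z)"

end

theory Submission
  imports Defs
begin

text \<open>Write \<open>v\<close> as its longest prefix of the form \<open>u\<^sup>\<alpha>\<close> followed by a rest \<open>w\<close>.
The rest is nonempty, because \<open>v\<close> is primitive and differs from \<open>u\<close>. If the power is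
nontrivial, \<open>w\<close> is a proper suffix of the prime word \<open>v\<close>, so \<open>u \<le>\<^sub>l\<^sub>e\<^sub>x v \<le>\<^sub>l\<^sub>e\<^sub>x w\<close>.
By maximality of \<open>\<alpha>\<close>, \<open>u\<close> is not a prefix of \<open>w\<close>, hence \<open>u <\<^sub>s\<^sub>t\<^sub>r w\<close>, and the prefix \<open>x\<close>
of \<open>w\<close> ending at the first letter where \<open>w\<close> differs from \<open>u\<close> has \<open>|x| \<le> |u|\<close>.\<close>

lemma wo_refl: "Well_order r \<Longrightarrow> a \<in> Field r \<Longrightarrow> (a,a) \<in> r"
  by (simp add: well_order_on_def linear_order_on_def partial_order_on_def preorder_on_def refl_on_def)

lemma wo_antisym: "Well_order r \<Longrightarrow> (a,b) \<in> r \<Longrightarrow> (b,a) \<in> r \<Longrightarrow> a = b"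
  by (simp add: well_order_on_def linear_order_on_def partial_order_on_def antisym_def)

lemma wo_trans: "Well_order r \<Longrightarrow> (a,b) \<in> r \<Longrightarrow> (b,c) \<in> r \<Longrightarrow> (a,c) \<in> r"
  unfolding well_order_on_def linear_order_on_def partial_order_on_def preorder_on_def trans_def
  by blast

lemma wo_total: "Well_order r \<Longrightarrow> a \<in> Field r \<Longrightarrow> b \<in> Field r \<Longrightarrow> (a,b) \<in> r \<or> (b,a) \<in> r"
  using wo_refl[of r a] unfolding well_order_on_def linear_order_on_def total_on_def by metis

lemma wo_least:
  assumes r: "Well_order r" and A: "A \<subseteq> Field r" "a \<in> A"
  obtains s where "s \<in> A" "\<forall>k\<in>A. (s,k) \<in> r"
proof -
  obtain s where sA: "s \<in> A" and smin: "\<And>y. (y,s) \<in> r - Id \<Longrightarrow> y \<notin> A"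
    using wfE_min[of "r - Id" a A] r A(2) by (auto simp: well_order_on_def)
  have "\<forall>k\<in>A. (s,k) \<in> r"
    using smin wo_total[OF r] wo_refl[OF r] sA A(1) by blast
  then show ?thesis using that sA by blast
qed

lemma ofilter_iff: "ofilter r A \<longleftrightarrow> A \<subseteq> Field r \<and> (\<forall>a\<in>A. \<forall>b. (b,a) \<in> r \<longrightarrow> b \<in> A)"
  unfolding ofilter_def under_def by blast

lemma ofilter_mem: "ofilter r A \<Longrightarrow> a \<in> A \<Longrightarrow> (b,a) \<in> r \<Longrightarrow> b \<in> A"
  unfolding ofilter_iff by blast

lemma ofilter_Field: "ofilter r A \<Longrightarrow> a \<in> A \<Longrightarrow> a \<in> Field r"
  unfolding ofilter_iff by blast

lemma ofilter_Field_self: "ofilter r (Field r)"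
  unfolding ofilter_iff by (auto intro: FieldI1)

lemma i_in_under: "Well_order r \<Longrightarrow> i \<in> Field r \<Longrightarrow> i \<in> under r i"
  unfolding under_def by (simp add: wo_refl)

lemma ofilter_under: "Well_order r \<Longrightarrow> ofilter r (under r i)"
  unfolding ofilter_iff under_def by (auto intro: wo_trans FieldI1)

lemma ofilter_underS: "Well_order r \<Longrightarrow> ofilter r (underS r i)"
  unfolding ofilter_iff underS_def by (auto intro: FieldI1 wo_trans dest: wo_antisym)

lemma ofilter_before_complement:
  assumes r: "Well_order r" and A: "ofilter r A" and a: "a \<in> A" and k: "k \<in> Field r - A"
  shows "(a,k) \<in> r \<and> (k,a) \<notin> r"
  using wo_total[OF r ofilter_Field[OF A a], of k] ofilter_mem[OF A a, of k] k by blast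

lemma under_least_complement:
  assumes r: "Well_order r" and A: "ofilter r A" and i: "i \<in> Field r - A"
    and least: "\<forall>k\<in>Field r - A. (i,k) \<in> r"
  shows "under r i = insert i A" "underS r i = A"
proof -
  have "\<And>k. (k,i) \<in> r \<Longrightarrow> k \<noteq> i \<Longrightarrow> k \<in> A"
    using least wo_antisym[OF r] by (blast intro: FieldI1)
  then show "under r i = insert i A" "underS r i = A"
    using ofilter_before_complement[OF r A _ i] wo_refl[OF r] i
    unfolding under_def underS_def by blast+
qed

lemma underS_least_complement: "Well_order r \<Longrightarrow> i \<in> Field r \<Longrightarrow>
    i \<in> Field r - underS r i \<and> (\<forall>k\<in>Field r - underS r i. (i,k) \<in> r)"
  unfolding underS_def using wo_total by fastforce

lemma wf_word_subword: "wf_word w \<Longrightarrow> wf_word (subword w P)"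
  by (simp add: wf_word_def subword_def Well_order_Restr)

lemma Field_Restr_subset: "Well_order r \<Longrightarrow> A \<subseteq> Field r \<Longrightarrow> Field (Restr r A) = A"
  by (simp add: Refl_Field_Restr2 order_on_defs)

lemma wdom_subword: "Well_order (fst w) \<Longrightarrow> P \<subseteq> wdom w \<Longrightarrow> wdom (subword w P) = P"
  unfolding wdom_def subword_def by (simp add: Field_Restr_subset)

lemma word_eq_refl: "word_eq w w"
  unfolding word_eq_def word_iso_def by (rule exI[of _ id]) auto

lemma word_iso_subword_iff:
  assumes "Well_order (fst w)" and "P \<subseteq> wdom w"
  shows "word_iso (subword w P) x g \<longleftrightarrow> bij_betw g P (wdom x) \<and>
     (\<forall>i\<in>P. \<forall>j\<in>P. (i,j) \<in> fst w \<longleftrightarrow> (g i, g j) \<in> fst x) \<and> (\<forall>i\<in>P. snd x (g i) = snd w i)"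
  using wdom_subword[OF assms] unfolding word_iso_def by (auto simp: subword_def)

lemma is_concat_ofilter:
  "ofilter (fst w) P \<Longrightarrow> is_concat w (subword w P) (subword w (wdom w - P))"
  unfolding is_concat_def ofilter_iff wdom_def using word_eq_refl by blast

lemma wo_wf: "Well_order r \<Longrightarrow> wf (r - Id)"
  by (simp add: well_order_on_def)

lemma underS_inj:
  assumes r: "Well_order r" and "a \<in> Field r" "b \<in> Field r" and "underS r a = underS r b"
  shows "a = b"
  using assms wo_total[OF r] wo_antisym[OF r] unfolding underS_def by blast

lemma ofilter_Un_ofilter_Restr:
  assumes P: "ofilter r P" and Q: "ofilter (Restr r (Field r - P)) Q"
  shows "ofilter r (P \<union> Q)"
  using assms unfolding ofilter_iff Field_def by blast

definition order_emb_on :: "'a rel \<Rightarrow> 'b rel \<Rightarrow> 'a set \<Rightarrow> ('a \<Rightarrow> 'b) \<Rightarrow> bool" where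
  "order_emb_on r s A f \<longleftrightarrow> A \<subseteq> Field r \<and> (\<forall>a\<in>A. \<forall>b\<in>A. (a,b) \<in> r \<longleftrightarrow> (f a, f b) \<in> s)"

lemma order_emb_on_Field: "Well_order r \<Longrightarrow> order_emb_on r s A f \<Longrightarrow> a \<in> A \<Longrightarrow> f a \<in> Field s"
  unfolding order_emb_on_def by (meson FieldI1 subsetD wo_refl)

lemma order_emb_on_inj: "Well_order r \<Longrightarrow> order_emb_on r s A f \<Longrightarrow> inj_on f A"
  unfolding inj_on_def order_emb_on_def by (metis subsetD wo_antisym wo_refl)

lemma order_emb_on_subset: "B \<subseteq> A \<Longrightarrow> order_emb_on r s A f \<Longrightarrow> order_emb_on r s B f"
  unfolding order_emb_on_def by blast

lemma order_emb_on_comp: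
  "order_emb_on r s A f \<Longrightarrow> f ` A \<subseteq> B \<Longrightarrow> order_emb_on s t B g \<Longrightarrow> order_emb_on r t A (g \<circ> f)"
  unfolding order_emb_on_def by (simp add: image_subset_iff)

lemma order_emb_on_inv_into:
  assumes r: "Well_order r" and e: "order_emb_on r s A f"
  shows "order_emb_on s r (f ` A) (inv_into A f)"
  using e order_emb_on_inj[OF r e] order_emb_on_Field[OF r e]
  unfolding order_emb_on_def by auto

lemma ofilter_image:
  assumes r: "Well_order r" and e: "order_emb_on r s A f" and d: "ofilter s (f ` A)"
    and B: "ofilter r B" "B \<subseteq> A"
  shows "ofilter s (f ` B)"
  unfolding ofilter_iff
proof (intro conjI ballI allI impI)
  show "f ` B \<subseteq> Field s" using d B unfolding ofilter_iff by blast
next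
  fix a c assume a: "a \<in> f ` B" and c: "(c, a) \<in> s"
  then obtain b where b: "b \<in> B" "a = f b" by blast
  obtain c' where c': "c' \<in> A" "c = f c'" using ofilter_mem[OF d _ c] b B(2) by blast
  have "(c', b) \<in> r" using e c' b B c unfolding order_emb_on_def by blast
  then show "c \<in> f ` B" using ofilter_mem[OF B(1) b(1)] c' by blast
qed

lemma image_under:
  assumes e: "order_emb_on r s A f" and d: "ofilter s (f ` A)"
    and A: "ofilter r A" and i: "i \<in> A"
  shows "f ` under r i = under s (f i)"
proof
  show "f ` under r i \<subseteq> under s (f i)"
    using e i ofilter_mem[OF A i] unfolding order_emb_on_def under_def by blast
next
  show "under s (f i) \<subseteq> f ` under r i"
  proof
    fix y assume y: "y \<in> under s (f i)"
    then obtain k where k: "k \<in> A" "y = f k" using ofilter_mem[OF d] i unfolding under_def by blast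
    then have "(k, i) \<in> r" using e i y unfolding order_emb_on_def under_def by blast
    then show "y \<in> f ` under r i" using k unfolding under_def by blast
  qed
qed

lemma image_underS:
  assumes r: "Well_order r" and e: "order_emb_on r s A f" and d: "ofilter s (f ` A)"
    and A: "ofilter r A" and i: "i \<in> A"
  shows "f ` underS r i = underS s (f i)"
proof -
  have "under r i \<subseteq> A" using ofilter_mem[OF A i] unfolding under_def by blast
  then have "f ` (under r i - {i}) = f ` under r i - {f i}"
    using inj_on_image_set_diff[OF order_emb_on_inj[OF r e], of "under r i" "{i}"] i by auto
  moreover have "underS r i = under r i - {i}" "underS s (f i) = under s (f i) - {f i}"
    unfolding under_def underS_def by blast+
  ultimately show ?thesis using image_under[OF e d A i] by simp
qed

text \<open>Working forms of \<open>is_prefix\<close> and \<open>str_less\<close>: a single letter-preserving order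
embedding of the first word, or of its part up to the position \<open>i\<close> where the letters
first differ, onto an initial segment of the second word.\<close>

definition prefix_emb :: "'a word \<Rightarrow> 'a word \<Rightarrow> (nat \<Rightarrow> nat) \<Rightarrow> bool" where
  "prefix_emb x y f \<longleftrightarrow> order_emb_on (fst x) (fst y) (Field (fst x)) f \<and>
     ofilter (fst y) (f ` Field (fst x)) \<and> (\<forall>k\<in>Field (fst x). snd y (f k) = snd x k)"

definition str_less_emb :: "'a::linorder word \<Rightarrow> 'a word \<Rightarrow> nat \<Rightarrow> (nat \<Rightarrow> nat) \<Rightarrow> bool" where
  "str_less_emb x y i f \<longleftrightarrow> i \<in> Field (fst x) \<and> order_emb_on (fst x) (fst y) (under (fst x) i) f \<and>
     ofilter (fst y) (f ` under (fst x) i) \<and>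
     (\<forall>k\<in>underS (fst x) i. snd y (f k) = snd x k) \<and> snd x i < snd y (f i)"

definition lex_le_emb :: "'a::linorder word \<Rightarrow> 'a word \<Rightarrow> bool" where
  "lex_le_emb x y \<longleftrightarrow> (\<exists>f. prefix_emb x y f) \<or> (\<exists>i f. str_less_emb x y i f)"

lemma prefix_emb_trans:
  assumes y: "Well_order (fst y)" and f: "prefix_emb x y f" and g: "prefix_emb y z g"
  shows "prefix_emb x z (g \<circ> f)"
proof -
  have fF: "f ` Field (fst x) \<subseteq> Field (fst y)"
    using f unfolding prefix_emb_def ofilter_iff by blast
  have g1: "order_emb_on (fst y) (fst z) (Field (fst y)) g" and g2: "ofilter (fst z) (g ` Field (fst y))"
    and g3: "\<forall>k\<in>Field (fst y). snd z (g k) = snd y k" using g unfolding prefix_emb_def by auto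
  have f1: "order_emb_on (fst x) (fst y) (Field (fst x)) f" and f2: "ofilter (fst y) (f ` Field (fst x))"
    and f3: "\<forall>k\<in>Field (fst x). snd y (f k) = snd x k" using f unfolding prefix_emb_def by auto
  have "ofilter (fst z) ((g \<circ> f) ` Field (fst x))"
    using ofilter_image[OF y g1 g2 f2 fF] by (simp add: image_comp)
  then show ?thesis
    using order_emb_on_comp[OF f1 fF g1] f3 g3 fF unfolding prefix_emb_def by auto
qed

lemma prefix_str_less_emb_trans:
  assumes x: "Well_order (fst x)" and f: "prefix_emb x y f"
    and g: "str_less_emb y z (f i) g" and i: "i \<in> Field (fst x)"
  shows "str_less_emb x z i (g \<circ> f)"
proof -
  have f1: "order_emb_on (fst x) (fst y) (Field (fst x)) f" and f2: "ofilter (fst y) (f ` Field (fst x))"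
    and f3: "\<forall>k\<in>Field (fst x). snd y (f k) = snd x k" using f unfolding prefix_emb_def by auto
  have im: "f ` under (fst x) i = under (fst y) (f i)"
    and imS: "f ` underS (fst x) i = underS (fst y) (f i)"
    using image_under[OF f1 f2 ofilter_Field_self i] image_underS[OF x f1 f2 ofilter_Field_self i] by auto
  have g1: "order_emb_on (fst y) (fst z) (under (fst y) (f i)) g"
    using g unfolding str_less_emb_def by simp
  have "order_emb_on (fst x) (fst z) (under (fst x) i) (g \<circ> f)"
    using order_emb_on_comp[OF order_emb_on_subset[OF under_Field f1] _ g1] im by simp
  moreover have "ofilter (fst z) ((g \<circ> f) ` under (fst x) i)"
    using g im unfolding str_less_emb_def by (metis image_comp)
  moreover have "\<forall>k\<in>underS (fst x) i. snd z ((g \<circ> f) k) = snd x k"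
  proof
    fix k assume k: "k \<in> underS (fst x) i"
    then have "f k \<in> underS (fst y) (f i)" using imS by blast
    then show "snd z ((g \<circ> f) k) = snd x k"
      using g f3 k underS_Field unfolding str_less_emb_def by fastforce
  qed
  ultimately show ?thesis
    using g f3 i unfolding str_less_emb_def by simp
qed

lemma prefix_emb_str_less_beyond:
  assumes y: "Well_order (fst y)" and f: "prefix_emb x y f"
    and g: "str_less_emb y z j g" and j: "j \<notin> f ` Field (fst x)"
  shows "prefix_emb x z (g \<circ> f)"
proof -
  have f1: "order_emb_on (fst x) (fst y) (Field (fst x)) f" and f2: "ofilter (fst y) (f ` Field (fst x))"
    and f3: "\<forall>k\<in>Field (fst x). snd y (f k) = snd x k" using f unfolding prefix_emb_def by auto
  have g1: "order_emb_on (fst y) (fst z) (under (fst y) j) g" and g2: "ofilter (fst z) (g ` under (fst y) j)"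
    and g3: "\<forall>k\<in>underS (fst y) j. snd z (g k) = snd y k" and jF: "j \<in> Field (fst y)"
    using g unfolding str_less_emb_def by auto
  have sub: "f ` Field (fst x) \<subseteq> underS (fst y) j"
  proof
    fix b assume b: "b \<in> f ` Field (fst x)"
    have "j \<in> Field (fst y) - f ` Field (fst x)" using jF j by blast
    then have "(b, j) \<in> fst y" "b \<noteq> j"
      using ofilter_before_complement[OF y f2 b] b j by blast+
    then show "b \<in> underS (fst y) j" unfolding underS_def by blast
  qed
  then have sub2: "f ` Field (fst x) \<subseteq> under (fst y) j"
    using underS_subset_under[of "fst y" j] by blast
  have "ofilter (fst z) ((g \<circ> f) ` Field (fst x))"
    using ofilter_image[OF y g1 g2 f2 sub2] by (simp add: image_comp)
  moreover have "\<forall>k\<in>Field (fst x). snd z ((g \<circ> f) k) = snd x k"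
    using f3 g3 sub by auto
  ultimately show ?thesis
    using order_emb_on_comp[OF f1 sub2 g1] unfolding prefix_emb_def by blast
qed

lemma str_less_prefix_emb_trans:
  assumes x: "Well_order (fst x)" and y: "Well_order (fst y)"
    and f: "str_less_emb x y i f" and g: "prefix_emb y z g"
  shows "str_less_emb x z i (g \<circ> f)"
proof -
  have i: "i \<in> Field (fst x)" and f1: "order_emb_on (fst x) (fst y) (under (fst x) i) f"
    and f2: "ofilter (fst y) (f ` under (fst x) i)" using f unfolding str_less_emb_def by auto
  have g1: "order_emb_on (fst y) (fst z) (Field (fst y)) g" and g2: "ofilter (fst z) (g ` Field (fst y))"
    and g3: "\<forall>k\<in>Field (fst y). snd z (g k) = snd y k" using g unfolding prefix_emb_def by auto
  have fF: "f ` under (fst x) i \<subseteq> Field (fst y)" using f2 unfolding ofilter_iff by blast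
  have "ofilter (fst z) ((g \<circ> f) ` under (fst x) i)"
    using ofilter_image[OF y g1 g2 f2 fF] by (simp add: image_comp)
  moreover have "\<forall>k\<in>under (fst x) i. snd z ((g \<circ> f) k) = snd y (f k)"
    using g3 fF by auto
  ultimately show ?thesis
    using order_emb_on_comp[OF f1 fF g1] f underS_subset_under i_in_under[OF x i]
    unfolding str_less_emb_def by fastforce
qed

lemma str_less_emb_trans_le:
  assumes x: "Well_order (fst x)" and y: "Well_order (fst y)"
    and f: "str_less_emb x y i f" and g: "str_less_emb y z j g" and le: "(f i, j) \<in> fst y"
  shows "str_less_emb x z i (g \<circ> f)"
proof -
  have i: "i \<in> Field (fst x)" and f1: "order_emb_on (fst x) (fst y) (under (fst x) i) f"
    and f2: "ofilter (fst y) (f ` under (fst x) i)" and f3: "\<forall>k\<in>underS (fst x) i. snd y (f k) = snd x k"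
    and f4: "snd x i < snd y (f i)" using f unfolding str_less_emb_def by auto
  have g1: "order_emb_on (fst y) (fst z) (under (fst y) j) g" and g2: "ofilter (fst z) (g ` under (fst y) j)"
    and g3: "\<forall>k\<in>underS (fst y) j. snd z (g k) = snd y k" and g4: "snd y j < snd z (g j)"
    using g unfolding str_less_emb_def by auto
  have iu: "i \<in> under (fst x) i" using i_in_under[OF x i] .
  have im: "f ` under (fst x) i = under (fst y) (f i)"
    and imS: "f ` underS (fst x) i = underS (fst y) (f i)"
    using image_under[OF f1 f2 ofilter_under[OF x] iu] image_underS[OF x f1 f2 ofilter_under[OF x] iu]
    by auto
  have sub: "under (fst y) (f i) \<subseteq> under (fst y) j"
    using le unfolding under_def by (auto intro: wo_trans[OF y])
  have subS: "underS (fst y) (f i) \<subseteq> underS (fst y) j"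
    using le wo_antisym[OF y] unfolding underS_def by (auto intro: wo_trans[OF y])
  have "order_emb_on (fst x) (fst z) (under (fst x) i) (g \<circ> f)"
    using order_emb_on_comp[OF f1 _ g1] sub im by simp
  moreover have "ofilter (fst z) ((g \<circ> f) ` under (fst x) i)"
    using ofilter_image[OF y g1 g2 ofilter_under[OF y] sub] im by (metis image_comp)
  moreover have "\<forall>k\<in>underS (fst x) i. snd z ((g \<circ> f) k) = snd x k"
  proof
    fix k assume "k \<in> underS (fst x) i"
    moreover from this have "f k \<in> underS (fst y) j" using imS subS by blast
    ultimately show "snd z ((g \<circ> f) k) = snd x k" using f3 g3 by simp
  qed
  moreover have "snd x i < snd z ((g \<circ> f) i)"
  proof (cases "f i = j")
    case True
    then show ?thesis using f4 g4 by auto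
  next
    case False
    then have "f i \<in> underS (fst y) j" using le unfolding underS_def by blast
    then show ?thesis using f4 g3 by auto
  qed
  ultimately show ?thesis using i unfolding str_less_emb_def by blast
qed

lemma str_less_emb_trans_gt:
  assumes x: "Well_order (fst x)"
    and f: "str_less_emb x y i f" and g: "str_less_emb y z (f k) g" and k: "k \<in> underS (fst x) i"
  shows "str_less_emb x z k (g \<circ> f)"
proof -
  have f1: "order_emb_on (fst x) (fst y) (under (fst x) i) f"
    and f2: "ofilter (fst y) (f ` under (fst x) i)" and f3: "\<forall>m\<in>underS (fst x) i. snd y (f m) = snd x m"
    using f unfolding str_less_emb_def by auto
  have g1: "order_emb_on (fst y) (fst z) (under (fst y) (f k)) g"
    and g3: "\<forall>m\<in>underS (fst y) (f k). snd z (g m) = snd y m" and g4: "snd y (f k) < snd z (g (f k))"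
    using g unfolding str_less_emb_def by auto
  have ku: "k \<in> under (fst x) i" using k underS_subset_under by fast
  have subk: "under (fst x) k \<subseteq> under (fst x) i"
    using ku unfolding under_def by (auto intro: wo_trans[OF x])
  have subSk: "underS (fst x) k \<subseteq> underS (fst x) i"
    using k wo_antisym[OF x] unfolding underS_def by (auto intro: wo_trans[OF x])
  have im: "f ` under (fst x) k = under (fst y) (f k)"
    using image_under[OF f1 f2 ofilter_under[OF x] ku] .
  have imS: "f ` underS (fst x) k = underS (fst y) (f k)"
    using image_underS[OF x f1 f2 ofilter_under[OF x] ku] .
  have "order_emb_on (fst x) (fst z) (under (fst x) k) (g \<circ> f)"
    using order_emb_on_comp[OF order_emb_on_subset[OF subk f1] _ g1] im by simp
  moreover have "ofilter (fst z) ((g \<circ> f) ` under (fst x) k)"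
    using g im unfolding str_less_emb_def by (metis image_comp)
  moreover have "\<forall>m\<in>underS (fst x) k. snd z ((g \<circ> f) m) = snd x m"
  proof
    fix m assume "m \<in> underS (fst x) k"
    moreover from this have "f m \<in> underS (fst y) (f k)" using imS by blast
    ultimately show "snd z ((g \<circ> f) m) = snd x m" using subSk f3 g3 by auto
  qed
  moreover have "snd x k < snd z ((g \<circ> f) k)" using f3 g4 k by auto
  moreover have "k \<in> Field (fst x)" using k underS_Field by fast
  ultimately show ?thesis unfolding str_less_emb_def by blast
qed

lemma prefix_str_less_emb_lex_le:
  assumes x: "Well_order (fst x)" and y: "Well_order (fst y)"
    and f: "prefix_emb x y f" and g: "str_less_emb y z j g"
  shows "lex_le_emb x z"
proof (cases "j \<in> f ` Field (fst x)")
  case True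
  then obtain i where "i \<in> Field (fst x)" "j = f i" by blast
  then show ?thesis using prefix_str_less_emb_trans[OF x f] g unfolding lex_le_emb_def by blast
next
  case False
  then show ?thesis using prefix_emb_str_less_beyond[OF y f g] unfolding lex_le_emb_def by blast
qed

lemma str_less_emb_trans:
  assumes x: "Well_order (fst x)" and y: "Well_order (fst y)"
    and f: "str_less_emb x y i f" and g: "str_less_emb y z j g"
  shows "\<exists>k h. str_less_emb x z k h"
proof (cases "(f i, j) \<in> fst y")
  case True
  then show ?thesis using str_less_emb_trans_le[OF x y f g] by blast
next
  case False
  have "f i \<in> Field (fst y)"
    using order_emb_on_Field[OF x _ i_in_under[OF x]] f unfolding str_less_emb_def by blast
  moreover have "j \<in> Field (fst y)" using g unfolding str_less_emb_def by blast
  ultimately have "j \<in> underS (fst y) (f i)"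
    using False wo_total[OF y] unfolding underS_def by (auto intro: wo_refl[OF y])
  then obtain k where "k \<in> underS (fst x) i" "j = f k"
    using image_underS[OF x _ _ ofilter_under[OF x] i_in_under[OF x]] f
    unfolding str_less_emb_def by (metis imageE)
  then show ?thesis using str_less_emb_trans_gt[OF x f] g by blast
qed

lemma lex_le_emb_trans:
  assumes x: "Well_order (fst x)" and y: "Well_order (fst y)"
    and xy: "lex_le_emb x y" and yz: "lex_le_emb y z"
  shows "lex_le_emb x z"
proof -
  consider (pre_pre) f g where "prefix_emb x y f" "prefix_emb y z g"
    | (pre_str) f j g where "prefix_emb x y f" "str_less_emb y z j g"
    | (str_pre) i f g where "str_less_emb x y i f" "prefix_emb y z g"
    | (str_str) i f j g where "str_less_emb x y i f" "str_less_emb y z j g"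
    using xy yz unfolding lex_le_emb_def by blast
  then show ?thesis
  proof cases
    case pre_pre
    then show ?thesis using prefix_emb_trans[OF y] unfolding lex_le_emb_def by blast
  next
    case pre_str
    then show ?thesis using prefix_str_less_emb_lex_le[OF x y] by blast
  next
    case str_pre
    then show ?thesis using str_less_prefix_emb_trans[OF x y] unfolding lex_le_emb_def by blast
  next
    case str_str
    then show ?thesis using str_less_emb_trans[OF x y] unfolding lex_le_emb_def by blast
  qed
qed

lemma is_prefix_imp_prefix_emb:
  assumes wx: "wf_word x" and wy: "wf_word y" and p: "is_prefix x y"
  shows "\<exists>f. prefix_emb x y f"
proof -
  have s: "Well_order (fst y)" using wy by (simp add: wf_word_def)
  obtain P where P: "P \<subseteq> wdom y" and dc: "\<forall>i\<in>P. \<forall>j\<in>wdom y. (j, i) \<in> fst y \<longrightarrow> j \<in> P"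
    and e: "word_eq (subword y P) x"
    using p unfolding is_prefix_def is_concat_def by blast
  obtain g where "word_iso (subword y P) x g" using e unfolding word_eq_def by blast
  then have g1: "bij_betw g P (Field (fst x))"
    and g2: "\<forall>i\<in>P. \<forall>j\<in>P. (i,j) \<in> fst y \<longleftrightarrow> (g i, g j) \<in> fst x"
    and g3: "\<forall>i\<in>P. snd x (g i) = snd y i"
    using word_iso_subword_iff[OF s P] by (auto simp: wdom_def)
  define f where "f = inv_into P g"
  have im: "g ` P = Field (fst x)" and inj: "inj_on g P" using g1 by (auto simp: bij_betw_def)
  have "order_emb_on (fst y) (fst x) P g" using g2 P unfolding order_emb_on_def wdom_def by blast
  then have "order_emb_on (fst x) (fst y) (Field (fst x)) f"
    using order_emb_on_inv_into[OF s] im f_def by metis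
  moreover have "f ` Field (fst x) = P" using im f_def inj by (metis inv_into_image_cancel order_refl)
  moreover have "ofilter (fst y) P" using P dc unfolding ofilter_iff wdom_def by (blast intro: FieldI1)
  moreover have "\<forall>k\<in>Field (fst x). snd y (f k) = snd x k"
  proof
    fix k assume "k \<in> Field (fst x)"
    then have "f k \<in> P" "g (f k) = k" using im f_def by (auto intro: inv_into_into f_inv_into_f)
    then show "snd y (f k) = snd x k" using g3 by metis
  qed
  ultimately show ?thesis unfolding prefix_emb_def by auto
qed

lemma is_concat_letter_first:
  assumes wt: "wf_word t" and c: "is_concat t (letter a) z"
  shows "\<exists>q\<in>wdom t. snd t q = a \<and> (\<forall>k\<in>wdom t. (q,k) \<in> fst t)"
proof -
  have s: "Well_order (fst t)" using wt by (simp add: wf_word_def)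
  obtain Q where Q: "Q \<subseteq> wdom t" and dc: "\<forall>i\<in>Q. \<forall>j\<in>wdom t. (j, i) \<in> fst t \<longrightarrow> j \<in> Q"
    and e: "word_eq (subword t Q) (letter a)" using c unfolding is_concat_def by blast
  obtain g where g: "word_iso (subword t Q) (letter a) g" using e unfolding word_eq_def by blast
  have "wdom (letter a) = {0}" by (simp add: wdom_def letter_def Field_def)
  then have g1: "bij_betw g Q {0}" and g3: "\<forall>i\<in>Q. snd (letter a) (g i) = snd t i"
    using g word_iso_subword_iff[OF s Q] by auto
  obtain q where q: "q \<in> Q" using g1 by (metis bij_betwE bij_betw_inv_into empty_iff insertI1)
  have single: "\<And>k. k \<in> Q \<Longrightarrow> k = q"
  proof -
    fix k assume "k \<in> Q"
    then have "g k = g q" using g1 q by (auto dest: bij_betwE)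
    then show "k = q" using g1 q \<open>k \<in> Q\<close> unfolding bij_betw_def by (metis inj_onD)
  qed
  have "\<forall>k\<in>wdom t. (q,k) \<in> fst t"
  proof
    fix k assume k: "k \<in> wdom t"
    show "(q,k) \<in> fst t"
    proof (cases "(k,q) \<in> fst t")
      case True
      then have "k = q" using dc q k single by blast
      then show ?thesis using wo_refl[OF s] k unfolding wdom_def by blast
    next
      case False
      then show ?thesis using wo_total[OF s, of q k] k Q q unfolding wdom_def by blast
    qed
  qed
  moreover have "snd t q = a" using g3 q by (simp add: letter_def)
  ultimately show ?thesis using q Q by blast
qed

lemma is_concat_first_letter_split:
  assumes wx: "wf_word x" and wt: "wf_word t" and c: "is_concat x y0 t"
    and q: "q \<in> wdom t" "snd t q = a" "\<forall>k\<in>wdom t. (q,k) \<in> fst t"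
  shows "\<exists>P i g. ofilter (fst x) P \<and> i \<in> Field (fst x) - P \<and>
     (\<forall>k\<in>Field (fst x) - P. (i,k) \<in> fst x) \<and> snd x i = a \<and> word_iso (subword x P) y0 g"
proof -
  have r: "Well_order (fst x)" using wx by (simp add: wf_word_def)
  obtain P where P: "P \<subseteq> wdom x" and dc: "\<forall>i\<in>P. \<forall>j\<in>wdom x. (j, i) \<in> fst x \<longrightarrow> j \<in> P"
    and e1: "word_eq (subword x P) y0" and e2: "word_eq (subword x (wdom x - P)) t"
    using c unfolding is_concat_def by blast
  obtain g1 where g1: "word_iso (subword x P) y0 g1" using e1 unfolding word_eq_def by blast
  obtain g2 where "word_iso (subword x (wdom x - P)) t g2" using e2 unfolding word_eq_def by blast
  then have b2: "bij_betw g2 (wdom x - P) (wdom t)"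
    and o2: "\<forall>i\<in>wdom x - P. \<forall>j\<in>wdom x - P. (i,j) \<in> fst x \<longleftrightarrow> (g2 i, g2 j) \<in> fst t"
    and l2: "\<forall>i\<in>wdom x - P. snd t (g2 i) = snd x i"
    using word_iso_subword_iff[OF r, of "wdom x - P"] by auto
  define i where "i = inv_into (wdom x - P) g2 q"
  have i1: "i \<in> wdom x - P" and i2: "g2 i = q"
    using b2 q(1) i_def by (metis bij_betw_def inv_into_into, metis bij_betw_def f_inv_into_f)
  have "snd x i = a" using l2 i1 i2 q(2) by metis
  moreover have "\<forall>k\<in>Field (fst x) - P. (i,k) \<in> fst x"
  proof
    fix k assume k: "k \<in> Field (fst x) - P"
    then have "g2 k \<in> wdom t" using b2 unfolding wdom_def bij_betw_def by blast
    then show "(i,k) \<in> fst x" using q(3) i2 o2 i1 k unfolding wdom_def by blast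
  qed
  moreover have "ofilter (fst x) P" using P dc unfolding ofilter_iff wdom_def by (blast intro: FieldI1)
  ultimately show ?thesis using i1 g1 unfolding wdom_def by blast
qed

lemma str_less_emb_intro:
  fixes lx ly :: "nat \<Rightarrow> 'a::linorder"
  assumes r: "Well_order r" and s: "Well_order s"
    and P: "ofilter r P" and i: "i \<in> Field r - P" "\<forall>k\<in>Field r - P. (i,k) \<in> r"
    and P': "ofilter s P'" and i': "i' \<in> Field s - P'" "\<forall>k\<in>Field s - P'. (i',k) \<in> s"
    and h: "order_emb_on r s P h" "h ` P = P'" "\<forall>k\<in>P. ly (h k) = lx k"
    and lt: "lx i < ly i'"
  shows "str_less_emb (r, lx) (s, ly) i (h(i := i'))"
proof -
  define f where "f = h(i := i')"
  have u: "under r i = insert i P" "underS r i = P" using under_least_complement[OF r P i] by auto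
  have v: "under s i' = insert i' P'" using under_least_complement[OF s P' i'] by auto
  have fP: "\<forall>k\<in>P. f k = h k" and fi: "f i = i'" using i f_def by auto
  have "order_emb_on r s (insert i P) f"
    unfolding order_emb_on_def
  proof (intro conjI ballI)
    show "insert i P \<subseteq> Field r" using P i unfolding ofilter_iff by blast
  next
    fix a b assume "a \<in> insert i P" "b \<in> insert i P"
    then show "(a, b) \<in> r \<longleftrightarrow> (f a, f b) \<in> s"
      using fi fP h wo_refl[OF r] wo_refl[OF s] i i'
        ofilter_before_complement[OF r P _ i(1)] ofilter_before_complement[OF s P' _ i'(1)]
      unfolding order_emb_on_def by (cases "a = i"; cases "b = i") auto
  qed
  moreover have "f ` insert i P = insert i' P'" using fi fP h(2) by auto
  moreover have "ofilter s (insert i' P')" using ofilter_under[OF s] v by metis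
  moreover have "\<forall>k\<in>P. ly (f k) = lx k" using fP h(3) by auto
  ultimately show ?thesis
    unfolding str_less_emb_def f_def[symmetric] using u i lt fi by auto
qed

lemma str_less_imp_str_less_emb:
  fixes x y :: "'a::linorder word"
  assumes wx: "wf_word x" and wy: "wf_word y" and st: "str_less x y"
  shows "\<exists>i f. str_less_emb x y i f"
proof -
  have r: "Well_order (fst x)" and s: "Well_order (fst y)" using wx wy by (auto simp: wf_word_def)
  obtain y0 z z' t t' a b where ab: "a < b"
    and w: "wf_word y0" "wf_word z" "wf_word z'" "wf_word t" "wf_word t'"
    and c1: "is_concat x y0 t" and c2: "is_concat t (letter a) z"
    and c3: "is_concat y y0 t'" and c4: "is_concat t' (letter b) z'"
    using st unfolding str_less_def by blast
  obtain P i g where P: "ofilter (fst x) P" and i: "i \<in> Field (fst x) - P" "\<forall>k\<in>Field (fst x) - P. (i,k) \<in> fst x"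
    and ia: "snd x i = a" and g: "word_iso (subword x P) y0 g"
    using is_concat_first_letter_split[OF wx w(4) c1] is_concat_letter_first[OF w(4) c2] by metis
  obtain P' i' g' where P': "ofilter (fst y) P'" and i': "i' \<in> Field (fst y) - P'" "\<forall>k\<in>Field (fst y) - P'. (i',k) \<in> fst y"
    and ib: "snd y i' = b" and g': "word_iso (subword y P') y0 g'"
    using is_concat_first_letter_split[OF wy w(5) c3] is_concat_letter_first[OF w(5) c4] by metis
  have PF: "P \<subseteq> wdom x" and PF': "P' \<subseteq> wdom y" using P P' unfolding ofilter_iff wdom_def by blast+
  have a1: "bij_betw g P (wdom y0)" "\<forall>i\<in>P. \<forall>j\<in>P. (i,j) \<in> fst x \<longleftrightarrow> (g i, g j) \<in> fst y0"
    "\<forall>i\<in>P. snd y0 (g i) = snd x i" using g word_iso_subword_iff[OF r PF] by auto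
  have a2: "bij_betw g' P' (wdom y0)" "\<forall>i\<in>P'. \<forall>j\<in>P'. (i,j) \<in> fst y \<longleftrightarrow> (g' i, g' j) \<in> fst y0"
    "\<forall>i\<in>P'. snd y0 (g' i) = snd y i" using g' word_iso_subword_iff[OF s PF'] by auto
  have im: "g ` P = wdom y0" "g' ` P' = wdom y0" using a1(1) a2(1) by (auto simp: bij_betw_def)
  have "order_emb_on (fst y) (fst y0) P' g'" using a2(2) PF' unfolding order_emb_on_def wdom_def by blast
  then have oi: "order_emb_on (fst y0) (fst y) (wdom y0) (inv_into P' g')"
    using order_emb_on_inv_into[OF s] im(2) by metis
  define h where "h = inv_into P' g' \<circ> g"
  have "order_emb_on (fst x) (fst y0) P g" using a1(2) PF unfolding order_emb_on_def wdom_def by blast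
  then have "order_emb_on (fst x) (fst y) P h"
    using order_emb_on_comp[OF _ _ oi] im(1) unfolding h_def by blast
  moreover have "h ` P = P'"
    unfolding h_def using im a2(1) by (metis bij_betw_def image_comp inv_into_image_cancel order_refl)
  moreover have "\<forall>k\<in>P. snd y (h k) = snd x k"
  proof
    fix k assume k: "k \<in> P"
    then have "g k \<in> g' ` P'" using im by blast
    then have "h k \<in> P'" "g' (h k) = g k" unfolding h_def by (auto intro: inv_into_into f_inv_into_f)
    then show "snd y (h k) = snd x k" using a2(3) a1(3) k by metis
  qed
  ultimately have "str_less_emb (fst x, snd x) (fst y, snd y) i (h(i := i'))"
    using str_less_emb_intro[OF r s P i P' i'] ia ib ab by blast
  then show ?thesis by auto
qed

lemma is_concat_letter_least:
  assumes w: "wf_word w" and P: "ofilter (fst w) P" and i: "i \<in> Field (fst w) - P"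
    and least: "\<forall>k\<in>Field (fst w) - P. (i,k) \<in> fst w"
  shows "is_concat (subword w (wdom w - P)) (letter (snd w i)) (subword w (wdom w - P - {i}))"
proof -
  have r: "Well_order (fst w)" using w by (simp add: wf_word_def)
  define t where "t = subword w (wdom w - P)"
  have rt: "Well_order (fst t)" using wf_word_subword[OF w] t_def by (simp add: wf_word_def)
  have dt: "wdom t = wdom w - P" using wdom_subword[OF r, of "wdom w - P"] t_def by auto
  have it: "{i} \<subseteq> wdom t" using dt i by (auto simp: wdom_def)
  have first: "\<forall>a\<in>{i}. \<forall>j\<in>wdom t. (j, a) \<in> fst t \<longrightarrow> j \<in> {i}"
    using least dt wo_antisym[OF r] by (auto simp: t_def subword_def wdom_def)
  have "word_iso (subword t {i}) (letter (snd w i)) (\<lambda>_. 0)"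
  proof -
    have "wdom (subword t {i}) = {i}" using wdom_subword[OF rt it] .
    moreover have "wdom (letter (snd w i)) = {0::nat}" by (simp add: wdom_def letter_def Field_def)
    moreover have "(i,i) \<in> fst (subword t {i})"
      using wo_refl[OF r] i by (simp add: t_def subword_def wdom_def)
    ultimately show ?thesis
      unfolding word_iso_def by (auto simp: letter_def subword_def t_def bij_betw_def)
  qed
  moreover have "subword t (wdom t - {i}) = subword w (wdom w - P - {i})"
    by (simp only: dt) (auto simp: t_def subword_def)
  ultimately show ?thesis unfolding is_concat_def t_def[symmetric]
    using it first word_eq_refl word_eq_def by metis
qed

lemma word_eq_subword_image:
  assumes r: "Well_order (fst x)" and s: "Well_order (fst y)"
    and P: "P \<subseteq> wdom x" and Q: "f ` P \<subseteq> wdom y"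
    and f: "order_emb_on (fst x) (fst y) P f" and lab: "\<forall>k\<in>P. snd y (f k) = snd x k"
  shows "word_eq (subword y (f ` P)) (subword x P)"
proof -
  have inj: "inj_on f P" using order_emb_on_inj[OF r f] .
  have "bij_betw (inv_into P f) (f ` P) P" using inj by (metis bij_betw_inv_into inj_on_imp_bij_betw)
  moreover have "\<forall>a\<in>f ` P. \<forall>b\<in>f ` P. (a,b) \<in> fst y \<longleftrightarrow> (inv_into P f a, inv_into P f b) \<in> fst (subword x P)"
  proof (intro ballI)
    fix a b assume "a \<in> f ` P" "b \<in> f ` P"
    moreover from this have "inv_into P f a \<in> P" "inv_into P f b \<in> P" by (auto intro: inv_into_into)
    ultimately show "(a,b) \<in> fst y \<longleftrightarrow> (inv_into P f a, inv_into P f b) \<in> fst (subword x P)"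
      using order_emb_on_inv_into[OF r f] unfolding order_emb_on_def by (auto simp: subword_def)
  qed
  moreover have "\<forall>a\<in>f ` P. snd (subword x P) (inv_into P f a) = snd y a"
    using lab inj by (auto simp: subword_def inv_into_f_f)
  ultimately have "word_iso (subword y (f ` P)) (subword x P) (inv_into P f)"
    using word_iso_subword_iff[OF s Q] wdom_subword[OF r P] by simp
  then show ?thesis unfolding word_eq_def by blast
qed

lemma str_less_emb_imp_str_less:
  fixes x y :: "'a::linorder word"
  assumes wx: "wf_word x" and wy: "wf_word y" and st: "str_less_emb x y i f"
  shows "str_less x y"
proof -
  have r: "Well_order (fst x)" and s: "Well_order (fst y)" using wx wy by (auto simp: wf_word_def)
  have i: "i \<in> Field (fst x)" and f1: "order_emb_on (fst x) (fst y) (under (fst x) i) f"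
    and f2: "ofilter (fst y) (f ` under (fst x) i)" and f3: "\<forall>k\<in>underS (fst x) i. snd y (f k) = snd x k"
    and f4: "snd x i < snd y (f i)" using st unfolding str_less_emb_def by auto
  define P where "P = underS (fst x) i"
  define P' where "P' = underS (fst y) (f i)"
  have iu: "i \<in> under (fst x) i" using i_in_under[OF r i] .
  have fP: "f ` P = P'" unfolding P_def P'_def using image_underS[OF r f1 f2 ofilter_under[OF r] iu] .
  have fi: "f i \<in> Field (fst y)" using order_emb_on_Field[OF r f1 iu] .
  have dP: "ofilter (fst x) P" and dP': "ofilter (fst y) P'"
    using ofilter_underS[OF r] ofilter_underS[OF s] P_def P'_def by auto
  have c1: "is_concat x (subword x P) (subword x (wdom x - P))" using is_concat_ofilter[OF dP] .
  have c2: "is_concat (subword x (wdom x - P)) (letter (snd x i)) (subword x (wdom x - P - {i}))"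
    using is_concat_letter_least[OF wx dP] underS_least_complement[OF r i] unfolding P_def by blast
  have c4: "is_concat (subword y (wdom y - P')) (letter (snd y (f i))) (subword y (wdom y - P' - {f i}))"
    using is_concat_letter_least[OF wy dP'] underS_least_complement[OF s fi] unfolding P'_def by blast
  have oP: "order_emb_on (fst x) (fst y) P f"
    using order_emb_on_subset[OF underS_subset_under f1] unfolding P_def .
  have PF: "P \<subseteq> wdom x" and PF': "P' \<subseteq> wdom y" using dP dP' unfolding ofilter_iff wdom_def by blast+
  have eq: "word_eq (subword y P') (subword x P)"
    using word_eq_subword_image[OF r s PF _ oP] fP PF' f3 P_def by simp
  have c3: "is_concat y (subword x P) (subword y (wdom y - P'))"
    unfolding is_concat_def
  proof (intro exI[of _ P'] conjI)
    show "\<forall>i\<in>P'. \<forall>j\<in>wdom y. (j, i) \<in> fst y \<longrightarrow> j \<in> P'" using dP' unfolding ofilter_iff by blast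
  qed (fact PF', fact eq, fact word_eq_refl)
  show ?thesis unfolding str_less_def
    by (intro exI[of _ "subword x P"] exI[of _ "subword x (wdom x - P - {i})"]
        exI[of _ "subword y (wdom y - P' - {f i})"] exI[of _ "subword x (wdom x - P)"]
        exI[of _ "subword y (wdom y - P')"] exI[of _ "snd x i"] exI[of _ "snd y (f i)"])
      (simp add: f4 c1 c2 c3 c4 wf_word_subword[OF wx] wf_word_subword[OF wy])
qed

lemma lex_le_imp_lex_le_emb:
  assumes "wf_word x" and "wf_word y" and "lex_le x y"
  shows "lex_le_emb x y"
  using assms is_prefix_imp_prefix_emb str_less_imp_str_less_emb
  unfolding lex_le_def lex_le_emb_def by blast

text \<open>\<open>pow_decomp P bs off\<close> decomposes the initial segment \<open>P\<close> of \<open>v = (R, l)\<close> into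
consecutive copies of \<open>u = (U, m)\<close>: \<open>bs i\<close> is the first position of the block containing
\<open>i\<close> and \<open>off i\<close> the corresponding position of \<open>u\<close>.\<close>

locale pow_setting =
  fixes R :: "nat rel" and l :: "nat \<Rightarrow> 'a::linorder" and U :: "nat rel" and m :: "nat \<Rightarrow> 'a"
  assumes R: "Well_order R" and U: "Well_order U"
begin

definition block_iso :: "nat set \<Rightarrow> (nat \<Rightarrow> nat) \<Rightarrow> bool" where
  "block_iso B off \<longleftrightarrow> bij_betw off B (Field U) \<and>
     (\<forall>i\<in>B. \<forall>j\<in>B. (i,j) \<in> R \<longleftrightarrow> (off i, off j) \<in> U) \<and> (\<forall>i\<in>B. m (off i) = l i)"

definition pow_decomp :: "nat set \<Rightarrow> (nat \<Rightarrow> nat) \<Rightarrow> (nat \<Rightarrow> nat) \<Rightarrow> bool" where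
  "pow_decomp P bs off \<longleftrightarrow> ofilter R P \<and>
     (\<forall>i\<in>P. bs i \<in> P \<and> (bs i, i) \<in> R \<and> bs (bs i) = bs i) \<and>
     (\<forall>i\<in>P. \<forall>j\<in>P. (i,j) \<in> R \<longrightarrow> (bs i, bs j) \<in> R) \<and>
     (\<forall>b\<in>bs ` P. block_iso {i\<in>P. bs i = b} off)"

lemma block_iso_cong: "(\<forall>i\<in>B. f i = g i) \<Longrightarrow> block_iso B f \<Longrightarrow> block_iso B g"
  unfolding block_iso_def by (simp cong: bij_betw_cong)

lemma block_iso_image_below:
  assumes b: "block_iso B off" and i: "i \<in> B"
  shows "off ` {j\<in>B. (j,i) \<in> R \<and> j \<noteq> i} = underS U (off i)"
proof -
  have bij: "bij_betw off B (Field U)" and o: "\<forall>i\<in>B. \<forall>j\<in>B. (i,j) \<in> R \<longleftrightarrow> (off i, off j) \<in> U"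
    using b unfolding block_iso_def by auto
  have "off j \<noteq> off i" if "j \<in> B" "j \<noteq> i" for j
    using bij i that unfolding bij_betw_def inj_on_def by blast
  moreover have "e \<in> off ` {j\<in>B. (j,i) \<in> R \<and> j \<noteq> i}" if e: "e \<in> underS U (off i)" for e
  proof -
    obtain j where "j \<in> B" "e = off j"
      using bij e unfolding bij_betw_def underS_def by (blast intro: FieldI1)
    then show ?thesis using o i e unfolding underS_def by auto
  qed
  ultimately show ?thesis
    using bij o i unfolding underS_def bij_betw_def by auto
qed

lemma block_iso_subset_onto:
  assumes b: "block_iso Y off" and XY: "X \<subseteq> Y" and onto: "off ` X = Field U"
  shows "X = Y"
proof (rule equalityI[OF XY])
  show "Y \<subseteq> X"
  proof
    fix j assume j: "j \<in> Y"
    have "off j \<in> Field U" and inj: "inj_on off Y"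
      using b j unfolding block_iso_def bij_betw_def by auto
    then obtain k where "k \<in> X" "off k = off j" using onto by (metis imageE)
    then show "j \<in> X" using inj XY j by (metis inj_onD subsetD)
  qed
qed

lemma pow_decompD:
  assumes "pow_decomp P bs off"
  shows "ofilter R P" "\<And>i. i \<in> P \<Longrightarrow> bs i \<in> P" "\<And>i. i \<in> P \<Longrightarrow> (bs i, i) \<in> R"
    "\<And>i. i \<in> P \<Longrightarrow> bs (bs i) = bs i"
    "\<And>i j. i \<in> P \<Longrightarrow> j \<in> P \<Longrightarrow> (i,j) \<in> R \<Longrightarrow> (bs i, bs j) \<in> R"
    "\<And>i. i \<in> P \<Longrightarrow> block_iso {j\<in>P. bs j = bs i} off"
  using assms unfolding pow_decomp_def by auto

lemma pow_decomp_block_image: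
  assumes "pow_decomp P bs off" and "i \<in> P"
  shows "off ` {j\<in>P. bs j = bs i} = Field U"
  using pow_decompD(6)[OF assms] unfolding block_iso_def bij_betw_def by blast

text \<open>If the block of \<open>i\<close> started earlier in the first decomposition, the block of the
second decomposition starting there would lie below \<open>i\<close>, hence be a proper part of a block
of the first one, while already being a full copy of \<open>u\<close>.\<close>

lemma pow_decomp_start_not_less:
  assumes S1: "pow_decomp P1 bs1 off1" and S2: "pow_decomp P2 bs2 off2"
    and i: "i \<in> P1" "i \<in> P2"
    and IH: "\<And>j. (j,i) \<in> R \<Longrightarrow> j \<noteq> i \<Longrightarrow> j \<in> P1 \<Longrightarrow> j \<in> P2 \<Longrightarrow> bs1 j = bs2 j \<and> off1 j = off2 j"
    and lt: "(bs1 i, bs2 i) \<in> R"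
  shows "bs1 i = bs2 i"
proof (rule ccontr)
  assume ne: "bs1 i \<noteq> bs2 i"
  note p1 = pow_decompD[OF S1] and p2 = pow_decompD[OF S2]
  define b where "b = bs1 i"
  have bi: "(b, i) \<in> R" and bP1: "b \<in> P1" and bb: "bs1 b = b" using p1(2-4)[OF i(1)] b_def by auto
  have "bs2 i = i"
  proof (rule ccontr)
    assume "bs2 i \<noteq> i"
    then have "bs1 (bs2 i) = bs2 i"
      using IH[OF p2(3)[OF i(2)] _ ofilter_mem[OF p1(1) i(1) p2(3)[OF i(2)]] p2(2)[OF i(2)]] p2(4)[OF i(2)]
      by simp
    then have "(bs2 i, b) \<in> R" using p1(5)[OF ofilter_mem[OF p1(1) i(1) p2(3)[OF i(2)]] i(1) p2(3)[OF i(2)]] b_def by simp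
    then show False using lt ne wo_antisym[OF R] b_def by blast
  qed
  then have bi': "b \<noteq> i" using ne b_def by simp
  have bP2: "b \<in> P2" using ofilter_mem[OF p2(1) i(2) bi] .
  have "bs2 b = b" using IH[OF bi bi' bP1 bP2] bb by simp
  define X where "X = {j\<in>P2. bs2 j = b}"
  have below: "(j,i) \<in> R \<and> j \<noteq> i \<and> j \<in> P1" if j: "j \<in> X" for j
  proof -
    have "(i,j) \<notin> R"
      using p2(5)[OF i(2), of j] j \<open>bs2 i = i\<close> bi bi' wo_antisym[OF R] X_def by auto
    then show ?thesis
      using wo_total[OF R ofilter_Field[OF p2(1)] ofilter_Field[OF p2(1) i(2)], of j] j
        wo_refl[OF R ofilter_Field[OF p2(1) i(2)]] ofilter_mem[OF p1(1) i(1)] X_def by blast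
  qed
  have agree: "j \<in> P1 \<and> bs1 j = b \<and> off1 j = off2 j" if "j \<in> X" for j
    using below[OF that] IH that X_def by auto
  have "off1 ` X = off2 ` X" using agree by (simp cong: image_cong)
  also have "\<dots> = Field U" using pow_decomp_block_image[OF S2 bP2] \<open>bs2 b = b\<close> X_def by simp
  finally have "X = {j\<in>P1. bs1 j = bs1 i}"
    using block_iso_subset_onto[OF p1(6)[OF i(1)]] agree b_def by blast
  then have "i \<in> X" using i(1) by blast
  then show False using below by blast
qed

lemma pow_decomp_coherent:
  assumes S1: "pow_decomp P1 bs1 off1" and S2: "pow_decomp P2 bs2 off2"
  shows "i \<in> P1 \<Longrightarrow> i \<in> P2 \<Longrightarrow> bs1 i = bs2 i \<and> off1 i = off2 i"
proof (induction i rule: wf_induct_rule[OF wo_wf[OF R]])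
  case (1 i)
  have IH: "\<And>j. (j,i) \<in> R \<Longrightarrow> j \<noteq> i \<Longrightarrow> j \<in> P1 \<Longrightarrow> j \<in> P2 \<Longrightarrow> bs1 j = bs2 j \<and> off1 j = off2 j"
    using 1 by blast
  note p1 = pow_decompD[OF S1] and p2 = pow_decompD[OF S2]
  have "(bs1 i, bs2 i) \<in> R \<or> (bs2 i, bs1 i) \<in> R"
    using wo_total[OF R ofilter_Field[OF p1(1) p1(2)] ofilter_Field[OF p2(1) p2(2)]] 1 by blast
  moreover have "(bs1 i, bs2 i) \<in> R \<Longrightarrow> bs1 i = bs2 i"
    using pow_decomp_start_not_less[OF S1 S2 1(2) 1(3)] IH by blast
  moreover have "(bs2 i, bs1 i) \<in> R \<Longrightarrow> bs2 i = bs1 i"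
    using pow_decomp_start_not_less[OF S2 S1 1(3) 1(2)] IH by (metis (no_types, lifting))
  ultimately have beq: "bs1 i = bs2 i" by auto
  have below: "j \<in> P1 \<and> j \<in> P2 \<and> bs1 j = bs2 j \<and> off1 j = off2 j" if "(j,i) \<in> R" "j \<noteq> i" for j
    using IH[OF that] ofilter_mem[OF p1(1) 1(2) that(1)] ofilter_mem[OF p2(1) 1(3) that(1)] by blast
  define Z where "Z = {j\<in>P1. bs1 j = bs1 i \<and> (j,i) \<in> R \<and> j \<noteq> i}"
  have Z2: "Z = {j\<in>P2. bs2 j = bs2 i \<and> (j,i) \<in> R \<and> j \<noteq> i}"
    unfolding Z_def using below beq by auto
  have "underS U (off1 i) = off1 ` Z"
    using block_iso_image_below[OF p1(6)[OF 1(2)]] 1(2) Z_def by (simp add: conj_assoc)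
  also have "\<dots> = off2 ` Z"
    by (rule image_cong[OF refl]) (use below Z_def in auto)
  also have "\<dots> = underS U (off2 i)"
    using block_iso_image_below[OF p2(6)[OF 1(3)]] 1(3) Z2 by (simp add: conj_assoc)
  finally have "off1 i = off2 i"
    using underS_inj[OF U] pow_decomp_block_image[OF S1 1(2)] pow_decomp_block_image[OF S2 1(3)] 1(2,3)
    by blast
  then show ?case using beq by simp
qed

text \<open>Since decompositions agree where both are defined, their union is again one:
the longest prefix of \<open>v\<close> that is a power of \<open>u\<close>.\<close>

definition pow_domain :: "nat set" where
  "pow_domain = \<Union>{P. \<exists>bs off. pow_decomp P bs off}"

definition pow_start :: "nat \<Rightarrow> nat" where
  "pow_start i = (SOME b. \<exists>P bs off. pow_decomp P bs off \<and> i \<in> P \<and> bs i = b)"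

definition pow_offset :: "nat \<Rightarrow> nat" where
  "pow_offset i = (SOME e. \<exists>P bs off. pow_decomp P bs off \<and> i \<in> P \<and> off i = e)"

lemma pow_decomp_agree:
  assumes S: "pow_decomp P bs off" and i: "i \<in> P"
  shows "pow_start i = bs i" "pow_offset i = off i"
proof -
  have "\<exists>P' bs' off'. pow_decomp P' bs' off' \<and> i \<in> P' \<and> bs' i = pow_start i"
    unfolding pow_start_def by (rule someI_ex) (use S i in blast)
  then show "pow_start i = bs i" using pow_decomp_coherent[OF _ S _ i] by metis
  have "\<exists>P' bs' off'. pow_decomp P' bs' off' \<and> i \<in> P' \<and> off' i = pow_offset i"
    unfolding pow_offset_def by (rule someI_ex) (use S i in blast)
  then show "pow_offset i = off i" using pow_decomp_coherent[OF _ S _ i] by metis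
qed

lemma pow_decomp_subset_domain: "pow_decomp P bs off \<Longrightarrow> P \<subseteq> pow_domain"
  unfolding pow_domain_def by blast

lemma pow_domainE:
  assumes "i \<in> pow_domain"
  obtains P bs off where "pow_decomp P bs off" "i \<in> P"
  using assms unfolding pow_domain_def by blast

lemma ofilter_pow_domain: "ofilter R pow_domain"
  unfolding ofilter_iff
proof (intro conjI ballI allI impI)
  show "pow_domain \<subseteq> Field R"
    by (auto elim!: pow_domainE dest: pow_decompD(1) ofilter_Field)
next
  fix a b assume a: "a \<in> pow_domain" and ba: "(b,a) \<in> R"
  obtain P bs off where S: "pow_decomp P bs off" "a \<in> P" using a by (rule pow_domainE)
  then show "b \<in> pow_domain"
    using ofilter_mem[OF pow_decompD(1)[OF S(1)] S(2) ba] pow_decomp_subset_domain by blast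
qed

lemma pow_decomp_block_complete:
  assumes S: "pow_decomp P bs off" and S': "pow_decomp P' bs' off'"
    and i: "i \<in> P" and j: "j \<in> P'" and b: "bs' j = bs i"
  shows "j \<in> P"
proof (rule ccontr)
  assume jP: "j \<notin> P"
  note p = pow_decompD[OF S] and p' = pow_decompD[OF S']
  have PP': "P \<subseteq> P'"
    using ofilter_before_complement[OF R p(1)] ofilter_Field[OF p'(1) j] jP ofilter_mem[OF p'(1) j]
    by blast
  have coh: "\<And>k. k \<in> P \<Longrightarrow> bs' k = bs k \<and> off' k = off k"
    using pow_decomp_coherent[OF S' S] PP' by blast
  define Y where "Y = {k\<in>P. bs k = bs i}"
  have "off' ` Y = Field U" using pow_decomp_block_image[OF S i] coh Y_def by (simp add: image_def)
  moreover have "Y \<subseteq> {k\<in>P'. bs' k = bs' j}" using coh PP' b Y_def by auto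
  ultimately have "Y = {k\<in>P'. bs' k = bs' j}" using block_iso_subset_onto[OF p'(6)[OF j]] by blast
  then show False using j jP Y_def by blast
qed

lemma pow_domain_block_eq:
  assumes S: "pow_decomp P bs off" and i: "i \<in> P"
  shows "{j\<in>pow_domain. pow_start j = bs i} = {j\<in>P. bs j = bs i}"
proof
  show "{j\<in>P. bs j = bs i} \<subseteq> {j\<in>pow_domain. pow_start j = bs i}"
    using pow_decomp_agree[OF S] pow_decomp_subset_domain[OF S] by auto
next
  show "{j\<in>pow_domain. pow_start j = bs i} \<subseteq> {j\<in>P. bs j = bs i}"
  proof safe
    fix j assume jD: "j \<in> pow_domain" and jb: "pow_start j = bs i"
    obtain P' bs' off' where S': "pow_decomp P' bs' off'" and j: "j \<in> P'" using jD by (rule pow_domainE)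
    have "bs' j = bs i" using pow_decomp_agree(1)[OF S' j] jb by simp
    then show jP: "j \<in> P" using pow_decomp_block_complete[OF S S' i j] by blast
    then show "bs j = bs i" using pow_decomp_agree(1)[OF S jP] jb by simp
  qed
qed

lemma pow_decomp_maximal: "pow_decomp pow_domain pow_start pow_offset"
  unfolding pow_decomp_def
proof (intro conjI ballI impI)
  show "ofilter R pow_domain" by (rule ofilter_pow_domain)
next
  fix i assume "i \<in> pow_domain"
  then obtain P bs off where S: "pow_decomp P bs off" and i: "i \<in> P" by (rule pow_domainE)
  note p = pow_decompD[OF S] and ag = pow_decomp_agree[OF S]
  show "pow_start i \<in> pow_domain" "(pow_start i, i) \<in> R" "pow_start (pow_start i) = pow_start i"
    using ag[OF i] ag[OF p(2)[OF i]] p(2-4)[OF i] pow_decomp_subset_domain[OF S] by auto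
  fix j assume jD: "j \<in> pow_domain" and ij: "(i,j) \<in> R"
  obtain P' bs' off' where S': "pow_decomp P' bs' off'" and j: "j \<in> P'" using jD by (rule pow_domainE)
  have "i \<in> P'" using ofilter_mem[OF pow_decompD(1)[OF S'] j ij] .
  then show "(pow_start i, pow_start j) \<in> R"
    using pow_decomp_agree(1)[OF S'] pow_decompD(5)[OF S' _ j ij] j by simp
next
  fix b assume "b \<in> pow_start ` pow_domain"
  then obtain i where "i \<in> pow_domain" and b: "b = pow_start i" by blast
  then obtain P bs off where S: "pow_decomp P bs off" and i: "i \<in> P" by (blast elim: pow_domainE)
  have "block_iso {j\<in>P. bs j = bs i} pow_offset"
    using block_iso_cong[OF _ pow_decompD(6)[OF S i]] pow_decomp_agree(2)[OF S] by auto
  then show "block_iso {j\<in>pow_domain. pow_start j = b} pow_offset"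
    using pow_domain_block_eq[OF S i] pow_decomp_agree(1)[OF S i] b by simp
qed

lemma prefix_emb_block_iso:
  assumes g: "prefix_emb (U, m) (Restr R W, l) g"
  shows "block_iso (g ` Field U) (inv_into (Field U) g)"
proof -
  have g1: "order_emb_on U (Restr R W) (Field U) g" and g2: "ofilter (Restr R W) (g ` Field U)"
    and g3: "\<forall>k\<in>Field U. l (g k) = m k" using g unfolding prefix_emb_def by auto
  have gW: "g ` Field U \<subseteq> W"
    using g2 unfolding ofilter_iff by (auto simp: Field_def)
  have "bij_betw (inv_into (Field U) g) (g ` Field U) (Field U)"
    using bij_betw_inv_into[OF inj_on_imp_bij_betw[OF order_emb_on_inj[OF U g1]]] .
  moreover have "\<forall>i\<in>g ` Field U. \<forall>j\<in>g ` Field U.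
      (i,j) \<in> R \<longleftrightarrow> (inv_into (Field U) g i, inv_into (Field U) g j) \<in> U"
  proof (intro ballI)
    fix i j assume "i \<in> g ` Field U" "j \<in> g ` Field U"
    moreover from this have "(i,j) \<in> R \<longleftrightarrow> (i,j) \<in> Restr R W" using gW by blast
    ultimately show "(i,j) \<in> R \<longleftrightarrow> (inv_into (Field U) g i, inv_into (Field U) g j) \<in> U"
      using order_emb_on_inv_into[OF U g1] unfolding order_emb_on_def by (metis (no_types, lifting))
  qed
  moreover have "\<forall>i\<in>g ` Field U. m (inv_into (Field U) g i) = l i"
    using g3 order_emb_on_inj[OF U g1] by (auto simp: inv_into_f_f)
  ultimately show ?thesis unfolding block_iso_def by blast
qed

lemma pow_decomp_add_block:
  assumes S: "pow_decomp P bs off" and Q: "ofilter (Restr R (Field R - P)) Q"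
    and s: "s \<in> Q" and least: "\<forall>k\<in>Field R - P. (s,k) \<in> R" and e: "block_iso Q e"
  shows "pow_decomp (P \<union> Q) (\<lambda>i. if i \<in> P then bs i else s) (\<lambda>i. if i \<in> P then off i else e i)"
    (is "pow_decomp ?P ?bs ?off")
proof -
  note p = pow_decompD[OF S]
  have QW: "Q \<subseteq> Field R - P" using Q unfolding ofilter_iff Field_def by blast
  have PQ: "P \<inter> Q = {}" and sP: "s \<notin> P" using QW s by auto
  have s_least: "\<And>i. i \<in> Q \<Longrightarrow> (s, i) \<in> R" using least QW by blast
  have "ofilter R ?P" using ofilter_Un_ofilter_Restr[OF p(1) Q] .
  moreover have "\<forall>i\<in>?P. ?bs i \<in> ?P \<and> (?bs i, i) \<in> R \<and> ?bs (?bs i) = ?bs i"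
    using p(2-4) s s_least sP by auto
  moreover have "\<forall>i\<in>?P. \<forall>j\<in>?P. (i,j) \<in> R \<longrightarrow> (?bs i, ?bs j) \<in> R"
  proof (intro ballI impI)
    fix i j assume i: "i \<in> ?P" and j: "j \<in> ?P" and ij: "(i,j) \<in> R"
    show "(?bs i, ?bs j) \<in> R"
    proof (cases "j \<in> P")
      case True
      then show ?thesis using ofilter_mem[OF p(1) True ij] p(5)[OF _ True ij] by simp
    next
      case False
      then show ?thesis
        using ofilter_before_complement[OF R p(1) p(2), of i s] QW s wo_refl[OF R, of s] by auto
    qed
  qed
  moreover have "\<forall>b\<in>?bs ` ?P. block_iso {i\<in>?P. ?bs i = b} ?off"
  proof
    fix b assume "b \<in> ?bs ` ?P"
    then consider i where "i \<in> P" "b = bs i" | "b = s" by auto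
    then show "block_iso {i\<in>?P. ?bs i = b} ?off"
    proof cases
      case 1
      then have "{i\<in>?P. ?bs i = b} = {j\<in>P. bs j = b}" using p(2) sP by auto
      then show ?thesis using block_iso_cong[OF _ p(6)[OF 1(1)]] 1 by simp
    next
      case 2
      then have "{i\<in>?P. ?bs i = b} = Q" using p(2) sP PQ by auto
      moreover have "\<forall>i\<in>Q. e i = ?off i" using PQ by auto
      ultimately show ?thesis using block_iso_cong[OF _ e] 2 by simp
    qed
  qed
  ultimately show ?thesis unfolding pow_decomp_def by blast
qed

lemma pow_decomp_extend:
  assumes S: "pow_decomp P bs off" and ne: "Field U \<noteq> {}"
    and g: "prefix_emb (U, m) (Restr R (Field R - P), l) g"
  shows "\<exists>P' bs' off'. pow_decomp P' bs' off' \<and> \<not> P' \<subseteq> P"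
proof -
  define Q where "Q = g ` Field U"
  have Q: "ofilter (Restr R (Field R - P)) Q" using g Q_def unfolding prefix_emb_def by simp
  have QW: "Q \<subseteq> Field R - P" using Q unfolding ofilter_iff Field_def by blast
  obtain q where "q \<in> Q" using ne Q_def by blast
  then obtain s where s: "s \<in> Field R - P" and least: "\<forall>k\<in>Field R - P. (s,k) \<in> R"
    using wo_least[OF R, of "Field R - P"] QW by blast
  have "s \<in> Q" using ofilter_mem[OF Q \<open>q \<in> Q\<close>, of s] least s QW \<open>q \<in> Q\<close> by blast
  then have "pow_decomp (P \<union> Q) (\<lambda>i. if i \<in> P then bs i else s)
      (\<lambda>i. if i \<in> P then off i else inv_into (Field U) g i)"
    using pow_decomp_add_block[OF S Q _ least] prefix_emb_block_iso[OF g] Q_def by blast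
  then show ?thesis using \<open>s \<in> Q\<close> s by blast
qed

lemma pow_decomp_bij:
  assumes S: "pow_decomp P bs off"
  shows "bij_betw (\<lambda>i. (bs i, off i)) P (bs ` P \<times> Field U)"
proof -
  have blk: "inj_on off {j\<in>P. bs j = bs i}" "off ` {j\<in>P. bs j = bs i} = Field U" if "i \<in> P" for i
    using pow_decompD(6)[OF S that] by (simp_all add: block_iso_def bij_betw_def)
  have "inj_on (\<lambda>i. (bs i, off i)) P"
  proof (rule inj_onI)
    fix i j assume i: "i \<in> P" and "j \<in> P" and "(bs i, off i) = (bs j, off j)"
    then show "i = j" using blk(1)[OF i] by (auto dest: inj_onD)
  qed
  moreover have "(\<lambda>i. (bs i, off i)) ` P = bs ` P \<times> Field U"
  proof
    show "(\<lambda>i. (bs i, off i)) ` P \<subseteq> bs ` P \<times> Field U" using blk(2) by fast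
    show "bs ` P \<times> Field U \<subseteq> (\<lambda>i. (bs i, off i)) ` P"
    proof safe
      fix i e assume i: "i \<in> P" and "e \<in> Field U"
      then obtain j where "j \<in> P" "bs j = bs i" "e = off j" using blk(2)[OF i] by force
      then show "(bs i, e) \<in> (\<lambda>i. (bs i, off i)) ` P" by (metis (no_types, lifting) image_eqI)
    qed
  qed
  ultimately show ?thesis unfolding bij_betw_def ..
qed

lemma pow_decomp_order_iff:
  assumes S: "pow_decomp P bs off" and i: "i \<in> P" and j: "j \<in> P"
  shows "(i,j) \<in> R \<longleftrightarrow>
    (bs i \<noteq> bs j \<and> (bs i, bs j) \<in> R) \<or> (bs i = bs j \<and> (off i, off j) \<in> U)"
proof (cases "bs i = bs j")
  case True
  then show ?thesis using pow_decompD(6)[OF S i] i j unfolding block_iso_def by auto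
next
  case False
  note p = pow_decompD[OF S]
  have "(i,j) \<in> R \<longleftrightarrow> (bs i, bs j) \<in> R"
  proof
    assume "(bs i, bs j) \<in> R"
    then show "(i,j) \<in> R"
      using p(5)[OF j i] wo_total[OF R ofilter_Field[OF p(1) i] ofilter_Field[OF p(1) j]]
        wo_antisym[OF R] False by blast
  qed (rule p(5)[OF i j])
  then show ?thesis using False by simp
qed

lemma pow_decomp_is_pow:
  assumes S: "pow_decomp P bs off"
  shows "is_pow (subword (R,l) P) (U,m) (Restr R (bs ` P))"
proof -
  note p = pow_decompD[OF S]
  have PF: "P \<subseteq> Field R" and BP: "bs ` P \<subseteq> P" using p(1,2) unfolding ofilter_iff by blast+
  have "wdom (subword (R,l) P) = P" using wdom_subword[of "(R,l)" P] R PF by (simp add: wdom_def)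
  moreover have "Field (Restr R (bs ` P)) = bs ` P" using Field_Restr_subset[OF R] BP PF by blast
  moreover have "\<forall>i\<in>P. l i = m (off i)" using p(6) unfolding block_iso_def by force
  ultimately show ?thesis unfolding is_pow_def
    using pow_decomp_bij[OF S] pow_decomp_order_iff[OF S] BP
    by (intro exI[of _ "\<lambda>i. (bs i, off i)"]) (auto simp: subword_def wdom_def)
qed

end

lemma ordLeq_Restr_image:
  assumes r: "Well_order r" and s: "Well_order s" and f: "order_emb_on r s A f"
    and A: "ofilter r A" and d: "ofilter s (f ` A)"
  shows "(Restr s (f ` A), r) \<in> ordLeq"
proof -
  have rs: "Well_order (Restr s (f ` A))" using Well_order_Restr[OF s] .
  have F: "Field (Restr s (f ` A)) = f ` A"
    using Field_Restr_subset[OF s] d unfolding ofilter_iff by blast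
  have "compat (Restr s (f ` A)) r (inv_into A f)"
    using order_emb_on_inv_into[OF r f] unfolding compat_def order_emb_on_def by auto
  moreover have "inj_on (inv_into A f) (Field (Restr s (f ` A)))"
    using F by (simp add: inj_on_inv_into)
  moreover have "inv_into A f ` Field (Restr s (f ` A)) = A"
    using F order_emb_on_inj[OF r f] by (simp add: inv_into_image_cancel)
  ultimately have "embed (Restr s (f ` A)) r (inv_into A f)"
    using embed_iff_compat_inj_on_ofilter[OF rs r] A by simp
  then show ?thesis unfolding ordLeq_def using rs r by blast
qed

lemma str_less_emb_prefix_split:
  fixes u q :: "'a::linorder word"
  assumes wu: "wf_word u" and wq: "wf_word q" and st: "str_less_emb u q i f"
  shows "\<exists>x y. wf_word x \<and> wf_word y \<and> is_concat q x y \<and> (fst x, fst u) \<in> ordLeq \<and> str_less u x"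
proof -
  have r: "Well_order (fst u)" and s: "Well_order (fst q)" using wu wq by (auto simp: wf_word_def)
  have f1: "order_emb_on (fst u) (fst q) (under (fst u) i) f" and f2: "ofilter (fst q) (f ` under (fst u) i)"
    using st unfolding str_less_emb_def by auto
  define x where "x = subword q (f ` under (fst u) i)"
  have wx: "wf_word x" using wf_word_subword[OF wq] x_def by simp
  have fx: "fst x = Restr (fst q) (f ` under (fst u) i)" by (simp add: x_def subword_def)
  have "str_less_emb u x i f"
    using st f2 Field_Restr_subset[OF s, of "f ` under (fst u) i"]
    unfolding str_less_emb_def order_emb_on_def ofilter_iff fx
    by (auto simp: x_def subword_def)
  then have "str_less u x" using str_less_emb_imp_str_less[OF wu wx] by blast
  moreover have "(fst x, fst u) \<in> ordLeq" using ordLeq_Restr_image[OF r s f1 ofilter_under[OF r] f2] fx by simp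
  moreover have "is_concat q x (subword q (wdom q - f ` under (fst u) i))"
    using is_concat_ofilter[OF f2] x_def by simp
  ultimately show ?thesis using wx wf_word_subword[OF wq] by blast
qed

lemma wdom_nonempty_if_primitive:
  assumes w: "wf_word u" and p: "primitive u"
  shows "wdom u \<noteq> {}"
proof
  assume e: "wdom u = {}"
  have "Well_order ({} :: nat rel)" by (simp add: order_on_defs trans_def antisym_def total_on_def)
  moreover have "is_pow u u {}" unfolding is_pow_def using e by (simp add: bij_betw_def)
  ultimately show False using p w unfolding primitive_def by fastforce
qed

lemma proper_suffix_complement:
  assumes w: "wf_word v" and P: "ofilter (fst v) P" and ne: "P \<noteq> {}" and W: "wdom v - P \<noteq> {}"
  shows "proper_suffix (subword v (wdom v - P)) v"
proof -
  have r: "Well_order (fst v)" using w by (simp add: wf_word_def)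
  obtain s where s: "s \<in> wdom v - P" and least: "\<forall>k\<in>wdom v - P. (s,k) \<in> fst v"
    using wo_least[OF r, of "wdom v - P"] W unfolding wdom_def by blast
  obtain j where j: "j \<in> P" using ne by blast
  have js: "j \<in> wdom v" "j \<noteq> s" "(j,s) \<in> fst v"
    using ofilter_before_complement[OF r P j, of s] s j ofilter_Field[OF P j] unfolding wdom_def by auto
  have suffix: "{i \<in> wdom v. (s, i) \<in> fst v} = wdom v - P"
  proof
    show "{i \<in> wdom v. (s, i) \<in> fst v} \<subseteq> wdom v - P" using ofilter_mem[OF P, of _ s] s by blast
    show "wdom v - P \<subseteq> {i \<in> wdom v. (s, i) \<in> fst v}" using least by blast
  qed
  show ?thesis unfolding proper_suffix_def
  proof (rule bexI[of _ s])
    show "(\<exists>j\<in>wdom v. j \<noteq> s \<and> (j, s) \<in> fst v) \<and>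
        word_eq (subword v (wdom v - P)) (subword v {i \<in> wdom v. (s, i) \<in> fst v})"
      using js suffix word_eq_refl[of "subword v (wdom v - P)"] by auto
  qed (use s in blast)
qed

context pow_setting
begin

lemma pow_domain_complement_nonempty:
  assumes "primitive (R, l)" and "\<not> word_eq (U, m) (R, l)"
  shows "Field R - pow_domain \<noteq> {}"
proof
  assume "Field R - pow_domain = {}"
  then have "subword (R, l) pow_domain = (R, l)"
    using ofilter_pow_domain unfolding ofilter_iff by (auto simp: subword_def Restr_Field)
  then have "is_pow (R, l) (U, m) (Restr R (pow_start ` pow_domain))"
    using pow_decomp_is_pow[OF pow_decomp_maximal] by simp
  then show False using assms U Well_order_Restr[OF R] unfolding primitive_def wf_word_def by fastforce
qed

lemma lex_le_emb_pow_domain_complement: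
  assumes v: "prime_word (R, l)" and uv: "lex_le_emb (U, m) (R, l)"
    and W: "Field R - pow_domain \<noteq> {}"
  shows "lex_le_emb (U, m) (subword (R, l) (Field R - pow_domain))"
proof (cases "pow_domain = {}")
  case True
  then show ?thesis using uv by (simp add: subword_def Restr_Field)
next
  case False
  have wv: "wf_word (R, l)" and ww: "wf_word (subword (R, l) (Field R - pow_domain))"
    using R wf_word_subword by (auto simp: wf_word_def)
  have "proper_suffix (subword (R, l) (Field R - pow_domain)) (R, l)"
    using proper_suffix_complement[OF wv _ False] ofilter_pow_domain W by (simp add: wdom_def)
  then have "lex_le_emb (R, l) (subword (R, l) (Field R - pow_domain))"
    using v ww lex_le_imp_lex_le_emb[OF wv ww] unfolding prime_word_def by blast
  then show ?thesis using lex_le_emb_trans[of "(U, m)" "(R, l)"] U R uv by simp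
qed

lemma pow_domain_complement_not_prefix:
  assumes "Field U \<noteq> {}"
  shows "\<not> prefix_emb (U, m) (Restr R (Field R - pow_domain), l) g"
  using pow_decomp_extend[OF pow_decomp_maximal assms] pow_decomp_subset_domain by blast

end

theorem mainTheorem9:
  fixes u v :: "('a::{linorder, finite}) word"
  assumes "wf_word u" and "wf_word v"
    and "prime_word u" and "prime_word v"
    and "lex_less u v"
  shows "\<exists>\<alpha> x y p q. Well_order \<alpha> \<and> wf_word x \<and> wf_word y \<and> wf_word p \<and> wf_word q \<and>
           is_pow p u \<alpha> \<and> is_concat v p q \<and> is_concat q x y \<and>
           (fst x, fst u) \<in> ordLeq \<and> str_less u x"
proof -
  obtain U m R l where u: "u = (U, m)" and v: "v = (R, l)" by (cases u, cases v)
  interpret pow_setting R l U m using assms(1,2) u v by unfold_locales (simp_all add: wf_word_def)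
  define q where "q = subword v (Field R - pow_domain)"
  have wq: "wf_word q" using wf_word_subword[OF assms(2)] q_def by simp
  have pow: "is_pow (subword v pow_domain) u (Restr R (pow_start ` pow_domain))"
    using pow_decomp_is_pow[OF pow_decomp_maximal] u v by simp
  have "ofilter (fst v) pow_domain" using ofilter_pow_domain v by simp
  then have cat: "is_concat v (subword v pow_domain) q" using is_concat_ofilter q_def v by (fastforce simp: wdom_def)
  have "Field R - pow_domain \<noteq> {}"
    using pow_domain_complement_nonempty assms(4,5) u v unfolding prime_word_def lex_less_def by blast
  moreover have "lex_le_emb u v" using lex_le_imp_lex_le_emb assms(1,2,5) unfolding lex_less_def by blast
  ultimately have lex: "lex_le_emb u q" using lex_le_emb_pow_domain_complement assms(4) u v q_def by blast
  have "wdom u \<noteq> {}" using wdom_nonempty_if_primitive assms(1,3) unfolding prime_word_def by blast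
  then have "\<nexists>g. prefix_emb u q g"
    using pow_domain_complement_not_prefix u v q_def by (simp add: wdom_def subword_def)
  then obtain i f where "str_less_emb u q i f" using lex unfolding lex_le_emb_def by blast
  then obtain x y where "wf_word x" "wf_word y" "is_concat q x y" "(fst x, fst u) \<in> ordLeq" "str_less u x"
    using str_less_emb_prefix_split[OF assms(1) wq] by blast
  then show ?thesis
    using pow cat Well_order_Restr[OF R] wq wf_word_subword[OF assms(2)] by blast
qed

end
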